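(* Let $k\ge0$, $n,q\ge1$, $\mathcal{X}\subset\mathbb{R}^n$ open, and let $\Psi\in C^0(\mathcal{X},\mathbb{R}^q)$ if $k=0$, or $\Psi\in C^k_b(\mathcal{X},\mathbb{R}^q)$ if $k\ge1$, be globally Lipschitz continuous with constant $K_\Psi\in[0,\infty)$. Fix $m\ge n+q$, $\tau\in[0,T]$, $w,\tilde w\in(0,\infty)$ and $K\in[0,\infty)$ with $$KT\ \ge\ \frac{K_\Psi}{w\tilde w}.$$ Then there exists an augmented neural DDE $\Phi\in\mathrm{NDDE}^k_\tau(\mathcal{X},\mathbb{R}^q)$ in dimension $m$ with $\Phi(x)=\Psi(x)$ for all $x\in\mathcal{X}$, whose vector field $F:\mathbb{R}\times\Omega_y\to\mathbb{R}^m$ is globally Lipschitz continuous in the second variable on $\mathbb{R}\times\Omega_0$ with constant $K$, where $\Omega_0=\{c_{\lambda(x)}:x\in\mathcal{X}\}\subset\Omega_y$, and whose weight matrices satisfy $\|W\|_\infty=w$, $\|\tilde W\|_\infty=\tilde w$.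
   Context: Throughout, $\|\cdot\|_\infty$ denotes the max-norm on $\mathbb{R}^d$ and, for a matrix $A\in\mathbb{R}^{r\times s}$, the induced norm $\|A\|_\infty=\max_{\|x\|_\infty=1}\|Ax\|_\infty$. Fix $T>0$, a delay $\tau\in[0,T]$ and $m\ge1$, and let $\mathcal{C}=C^0([-\tau,0],\mathbb{R}^m)$ with norm $\|u\|_\infty=\sup_{s\in[-\tau,0]}\|u(s)\|_\infty$. For a function $y$ defined on $[t-\tau,t]$, $y_t\in\mathcal{C}$ is $y_t(s)=y(t+s)$. For $a\in\mathbb{R}^m$, $c_a\in\mathcal{C}$ is the constant function $c_a(s)=a$. Given $F:\Omega\to\mathbb{R}^m$, $\Omega\subset\mathbb{R}\times\mathcal{C}$ open, and $(t_0,u)\in\Omega$, a solution of the DDE $\frac{dy}{dt}=F(t,y_t)$ ($t\ge t_0$), $y_{t_0}=u$, is a continuous $y:[t_0-\tau,t_0+c)\to\mathbb{R}^m$, $c\in(0,\infty]$, with $y_{t_0}=u$, $(t,y_t)\in\Omega$ and $y'(t)=F(t,y_t)$ for $t\in[t_0,t_0+c)$; it is denoted $y(t_0,u)$. $\mathcal{I}_a$ denotes the maximal interval of existence of $y(0,c_a)$. For $k\ge1$, $C^{0,k}_b(\Omega,\mathbb{R}^m)$ denotes the continuous maps $F$ on $\Omega$ that are $k$ times continuously Fréchet differentiable in the second variable with the derivatives of orders $1,\dots,k$ bounded on $\Omega$. Neural DDE: let $n,q\ge1$, $\mathcal{X}\subset\mathbb{R}^n$ open, $\lambda(x)=Wx+b$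 with $W\in\mathbb{R}^{m\times n}$, $b\in\mathbb{R}^m$, $\tilde\lambda(y)=\tilde Wy+\tilde b$ with $\tilde W\in\mathbb{R}^{q\times m}$, $\tilde b\in\mathbb{R}^q$, and $F:\Omega_t\times\Omega_y\to\mathbb{R}^m$ with $\Omega_t\subset\mathbb{R}$, $\Omega_y\subset\mathcal{C}$ open, satisfying the well-definedness conditions: $[0,T]\subset\Omega_t$, $\Omega_0:=\{c_{\lambda(x)}:x\in\mathcal{X}\}\subset\Omega_y$, and $[-\tau,T]\subset\mathcal{I}_{\lambda(x)}$ for all $x\in\mathcal{X}$. The associated neural DDE is $\Phi:\mathcal{X}\to\mathbb{R}^q$, $\Phi(x)=\tilde\lambda(y(0,c_{\lambda(x)})(T))$. For $k\ge1$, $\mathrm{NDDE}^k_\tau(\mathcal{X},\mathbb{R}^q)$ is the set of all such $\Phi$ with $F\in C^{0,k}_b(\Omega_t\times\Omega_y,\mathbb{R}^m)$; $\mathrm{NDDE}^0_\tau(\mathcal{X},\mathbb{R}^q)$ is the set of all such $\Phi$ for which the solutions $y(0,c_{\lambda(x)})$ are unique and continuous (and $\Phi$ is continuous). $\Phi$ is non-augmented if $m\le\max\{n,q\}$ and augmented if $m>\max\{n,q\}$. $C^k_b(\mathcal{X},\mathbb{R}^q)$ denotes the $k$ times continuously differentiable maps whose derivatives of orders $1,\dots,k$ are bounded on $\mathcal{X}$. Global Lipschitz continuity of $F$ in the second variable on $\mathbb{R}\times\Omega_0$ with constant $K$ means $\|F(t,u)-F(t,v)\|_\infty\le K\|u-v\|_\infty$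 for all $t\in\mathbb{R}$, $u,v\in\Omega_0$. *)

theory Defs
  imports "HOL-Analysis.Analysis"
begin

definition maxnorm :: "real^'n \<Rightarrow> real" where
  "maxnorm x = Max (range (\<lambda>i. \<bar>x $ i\<bar>))"

definition matnorm :: "real^'n^'m \<Rightarrow> real" where
  "matnorm A = (SUP x\<in>{x::real^'n. maxnorm x = 1}. maxnorm (A *v x))"

text \<open>An element of C is represented by a bounded continuous function on the real line
  that is constant outside [-tau,0] (extended by its boundary values); this is a
  bijective representation of C^0([-tau,0],R^m) as a closed linear subspace of the
  Banach space of bounded continuous functions.\<close>

definition Cspace :: "real \<Rightarrow> ((real \<Rightarrow>\<^sub>C (real^'m))) set" where
  "Cspace tau = {u. \<forall>s. apply_bcontfun u s = apply_bcontfun u (max (-tau) (min 0 s))}"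

definition Cnorm :: "real \<Rightarrow> ((real \<Rightarrow>\<^sub>C (real^'m))) \<Rightarrow> real" where
  "Cnorm tau u = (SUP s\<in>{-tau..0}. maxnorm (apply_bcontfun u s))"

definition cnst :: "real^'m \<Rightarrow> ((real \<Rightarrow>\<^sub>C (real^'m)))" where
  "cnst a = const_bcontfun a"

definition seg :: "real \<Rightarrow> (real \<Rightarrow> real^'m) \<Rightarrow> real \<Rightarrow> ((real \<Rightarrow>\<^sub>C (real^'m)))" where
  "seg tau y t = Bcontfun (\<lambda>s. y (t + max (-tau) (min 0 s)))"

text \<open>y is a solution of y' = F(t,y_t), y_{t0} = u on [t0-tau, t0+c), with c > 0 real
  (a finite horizon suffices for all uses below). The derivative at t0 is one-sided.\<close>
definition is_sol :: "real \<Rightarrow> real set \<Rightarrow> ((real \<Rightarrow>\<^sub>C (real^'m))) set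
    \<Rightarrow> (real \<Rightarrow> ((real \<Rightarrow>\<^sub>C (real^'m))) \<Rightarrow> real^'m)
    \<Rightarrow> real \<Rightarrow> ((real \<Rightarrow>\<^sub>C (real^'m))) \<Rightarrow> real \<Rightarrow> (real \<Rightarrow> real^'m) \<Rightarrow> bool" where
  "is_sol tau Ot Oy F t0 u c y \<longleftrightarrow>
     0 < c \<and> continuous_on {t0 - tau..<t0 + c} y \<and>
     (\<forall>s\<in>{-tau..0}. y (t0 + s) = apply_bcontfun u s) \<and>
     (\<forall>t\<in>{t0..<t0 + c}. t \<in> Ot \<and> seg tau y t \<in> Oy \<and>
        (y has_vector_derivative F t (seg tau y t)) (at t within {t0..<t0 + c}))"

text \<open>F is continuous on Omega and k times continuously Frechet differentiable in the
  second variable (relative to the ambient linear subspace V), the j-th derivative being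
  represented as a j-multilinear map acting on lists of directions in V; the derivatives
  of orders 1..k are continuous (in operator norm) and bounded (in operator norm) on Omega.
  For k = 0 this is just continuity on Omega.\<close>
definition C0k_b :: "nat \<Rightarrow> 'a::real_normed_vector set \<Rightarrow> ('p::topological_space \<times> 'a) set
    \<Rightarrow> ('p \<Rightarrow> 'a \<Rightarrow> 'b::real_normed_vector) \<Rightarrow> bool" where
  "C0k_b k V Om F \<longleftrightarrow>
     continuous_on Om (\<lambda>z. F (fst z) (snd z)) \<and>
     (\<exists>D :: nat \<Rightarrow> 'p \<Rightarrow> 'a \<Rightarrow> 'a list \<Rightarrow> 'b.
        (\<forall>z\<in>Om. D 0 (fst z) (snd z) [] = F (fst z) (snd z)) \<and>
        (\<forall>j<k. \<forall>z\<in>Om. \<forall>hs. length hs = j \<and> set hs \<subseteq> V \<longrightarrow>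
           ((\<lambda>v. D j (fst z) v hs) has_derivative (\<lambda>h. D (Suc j) (fst z) (snd z) (h # hs)))
             (at (snd z) within V)) \<and>
        (\<forall>j\<in>{1..k}. \<forall>z\<in>Om. \<forall>e>0. \<exists>U. open U \<and> z \<in> U \<and>
           (\<forall>z'\<in>Om \<inter> U. \<forall>hs. length hs = j \<and> set hs \<subseteq> V \<and> (\<forall>h\<in>set hs. norm h \<le> 1) \<longrightarrow>
              norm (D j (fst z') (snd z') hs - D j (fst z) (snd z) hs) \<le> e)) \<and>
        (\<forall>j\<in>{1..k}. \<exists>B. \<forall>z\<in>Om. \<forall>hs. length hs = j \<and> set hs \<subseteq> V \<and> (\<forall>h\<in>set hs. norm h \<le> 1) \<longrightarrow>
              norm (D j (fst z) (snd z) hs) \<le> B))"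

definition Ck_b :: "nat \<Rightarrow> 'a::real_normed_vector set \<Rightarrow> ('a \<Rightarrow> 'b::real_normed_vector) \<Rightarrow> bool" where
  "Ck_b k S f \<longleftrightarrow> C0k_b k UNIV ({0::real} \<times> S) (\<lambda>_. f)"

definition ndde_map :: "real \<Rightarrow> real \<Rightarrow> real set \<Rightarrow> ((real \<Rightarrow>\<^sub>C (real^'m))) set
    \<Rightarrow> (real \<Rightarrow> ((real \<Rightarrow>\<^sub>C (real^'m))) \<Rightarrow> real^'m)
    \<Rightarrow> real^'n^'m \<Rightarrow> real^'m \<Rightarrow> real^'m^'q \<Rightarrow> real^'q \<Rightarrow> real^'n \<Rightarrow> real^'q" where
  "ndde_map tau T Ot Oy F W b Wt bt x =
     Wt *v (THE v. \<exists>y c. is_sol tau Ot Oy F 0 (cnst (W *v x + b)) c y \<and> T < c \<and> y T = v) + bt"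

text \<open>(Ot, Oy, F, W, b, Wt, bt) defines an element of NDDE^k_tau(X, R^q):
  well-definedness conditions (maximal interval of existence contains [-tau,T]),
  uniqueness of solutions, and the regularity class (k = 0: Phi continuous;
  k \<ge> 1: F in C^{0,k}_b).\<close>
definition is_NDDE :: "nat \<Rightarrow> real \<Rightarrow> real \<Rightarrow> (real^'n) set \<Rightarrow> real set \<Rightarrow> ((real \<Rightarrow>\<^sub>C (real^'m))) set
    \<Rightarrow> (real \<Rightarrow> ((real \<Rightarrow>\<^sub>C (real^'m))) \<Rightarrow> real^'m)
    \<Rightarrow> real^'n^'m \<Rightarrow> real^'m \<Rightarrow> real^'m^'q \<Rightarrow> real^'q \<Rightarrow> bool" where
  "is_NDDE k tau T X Ot Oy F W b Wt bt \<longleftrightarrow>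
     open Ot \<and> openin (top_of_set (Cspace tau)) Oy \<and>
     {0..T} \<subseteq> Ot \<and> (\<forall>x\<in>X. cnst (W *v x + b) \<in> Oy) \<and>
     (\<forall>x\<in>X. \<exists>y c. T < c \<and> is_sol tau Ot Oy F 0 (cnst (W *v x + b)) c y) \<and>
     (\<forall>x\<in>X. \<forall>y1 c1 y2 c2. is_sol tau Ot Oy F 0 (cnst (W *v x + b)) c1 y1 \<and>
                          is_sol tau Ot Oy F 0 (cnst (W *v x + b)) c2 y2 \<longrightarrow>
                          (\<forall>t\<in>{-tau..<min c1 c2}. y1 t = y2 t)) \<and>
     (if k = 0 then continuous_on X (ndde_map tau T Ot Oy F W b Wt bt)
      else C0k_b k (Cspace tau) (Ot \<times> Oy) F)"

end

theory Submission
  imports Defs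
begin

text \<open>Embed the input x, scaled by w, into n coordinates of R^m and let the vector field be
  F(t,u) = Q (Psi (P (u 0))), where P reads those n coordinates back (undoing the scaling) and Q
  writes Psi(x) / (wt T) into q further coordinates. F vanishes on the input coordinates, so they
  keep the value x, F is constant along every solution, and the solution is the affine drift
  y(t) = W x + t Q (Psi x); reading the output coordinates with weight wt at time T gives Psi(x).
  On constant histories F has Lipschitz constant KPsi / (w wt T) \<le> K, and F inherits the
  regularity of Psi because P and Q are bounded linear.\<close>

section \<open>Max-norm and coordinate matrices\<close>

lemma abs_component_le_maxnorm: "\<bar>x $ i\<bar> \<le> maxnorm x"
  unfolding maxnorm_def by (rule Max_ge) auto

lemma maxnorm_le: "(\<And>i. \<bar>x $ i\<bar> \<le> B) \<Longrightarrow> maxnorm x \<le> B"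
  unfolding maxnorm_def by (subst Max_le_iff) auto

lemma maxnorm_attained: obtains i where "maxnorm x = \<bar>x $ i\<bar>"
proof -
  have "maxnorm x \<in> range (\<lambda>i. \<bar>x $ i\<bar>)"
    unfolding maxnorm_def by (rule Max_in) auto
  then show ?thesis using that by blast
qed

lemma maxnorm_nonneg: "0 \<le> maxnorm x"
  using abs_component_le_maxnorm[of x] abs_ge_zero order_trans by blast

lemma maxnorm_scaleR: "maxnorm (c *\<^sub>R x) = \<bar>c\<bar> * maxnorm x"
proof (rule antisym)
  show "maxnorm (c *\<^sub>R x) \<le> \<bar>c\<bar> * maxnorm x"
    by (rule maxnorm_le) (simp add: abs_mult abs_component_le_maxnorm mult_left_mono)
  obtain i where "maxnorm x = \<bar>x $ i\<bar>" by (rule maxnorm_attained)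
  then show "\<bar>c\<bar> * maxnorm x \<le> maxnorm (c *\<^sub>R x)"
    using abs_component_le_maxnorm[of "c *\<^sub>R x" i] by (simp add: abs_mult)
qed

lemma maxnorm_one: "maxnorm (1::real^'n) = 1"
  unfolding maxnorm_def by simp

lemma matnorm_eqI:
  assumes "\<And>x. maxnorm x = 1 \<Longrightarrow> maxnorm (A *v x) \<le> c"
    and "maxnorm x0 = 1" "maxnorm (A *v x0) = c"
  shows "matnorm A = c"
  unfolding matnorm_def
  by (rule cSup_eq_maximum) (use assms in \<open>force+\<close>)

definition coord_embedding :: "('n \<Rightarrow> 'm) \<Rightarrow> real^'n^'m" where
  "coord_embedding e = (\<chi> i j. if i = e j then 1 else 0)"

definition coord_projection :: "('q \<Rightarrow> 'm) \<Rightarrow> real^'m^'q" where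
  "coord_projection e = (\<chi> i j. if j = e i then 1 else 0)"

lemma coord_embedding_apply:
  assumes "inj e"
  shows "(coord_embedding e *v z) $ e j = z $ j"
proof -
  have "(\<Sum>k\<in>UNIV. (if e j = e k then 1 else 0) * z $ k) = (\<Sum>k\<in>UNIV. if k = j then z $ k else 0)"
    using injD[OF assms] by (intro sum.cong) auto
  then show ?thesis
    by (simp add: coord_embedding_def matrix_vector_mult_def)
qed

lemma coord_embedding_apply_outside: "i \<notin> range e \<Longrightarrow> (coord_embedding e *v z) $ i = 0"
  by (auto simp: coord_embedding_def matrix_vector_mult_def intro!: sum.neutral)

lemma coord_projection_apply: "(coord_projection e *v y) $ i = y $ e i"
proof -
  have "(\<Sum>k\<in>UNIV. (if k = e i then 1 else 0) * y $ k) = (\<Sum>k\<in>UNIV. if k = e i then y $ k else 0)"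
    by (intro sum.cong) auto
  then show ?thesis by (simp add: coord_projection_def matrix_vector_mult_def)
qed

lemma coord_projection_embedding: "inj e \<Longrightarrow> coord_projection e *v (coord_embedding e *v z) = z"
  by (simp add: vec_eq_iff coord_projection_apply coord_embedding_apply)

lemma coord_projection_embedding_disjoint:
  "range e \<inter> range e' = {} \<Longrightarrow> coord_projection e *v (coord_embedding e' *v z) = 0"
  by (auto simp: vec_eq_iff coord_projection_apply intro!: coord_embedding_apply_outside)

lemma maxnorm_coord_embedding:
  assumes "inj e"
  shows "maxnorm (coord_embedding e *v z) = maxnorm z"
proof (rule antisym)
  show "maxnorm (coord_embedding e *v z) \<le> maxnorm z"
  proof (rule maxnorm_le)
    fix i
    show "\<bar>(coord_embedding e *v z) $ i\<bar> \<le> maxnorm z"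
      by (cases "i \<in> range e")
        (auto simp: coord_embedding_apply coord_embedding_apply_outside assms
          abs_component_le_maxnorm maxnorm_nonneg)
  qed
  obtain j where "maxnorm z = \<bar>z $ j\<bar>" by (rule maxnorm_attained)
  then show "maxnorm z \<le> maxnorm (coord_embedding e *v z)"
    using abs_component_le_maxnorm[of "coord_embedding e *v z" "e j"]
    by (simp add: coord_embedding_apply assms)
qed

lemma maxnorm_coord_projection_le: "maxnorm (coord_projection e *v y) \<le> maxnorm y"
  by (rule maxnorm_le) (simp add: coord_projection_apply abs_component_le_maxnorm)

lemma matnorm_scaled_coord_embedding:
  assumes "inj e" "0 \<le> c"
  shows "matnorm (c *\<^sub>R coord_embedding e) = c"
  by (rule matnorm_eqI[of _ _ 1])
    (simp_all add: assms scaleR_matrix_vector_assoc[symmetric] maxnorm_scaleR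
      maxnorm_coord_embedding maxnorm_one)

lemma matnorm_scaled_coord_projection:
  assumes "0 \<le> c"
  shows "matnorm (c *\<^sub>R coord_projection e) = c"
proof (rule matnorm_eqI[of _ _ 1])
  show "maxnorm (c *\<^sub>R coord_projection e *v y) \<le> c" if "maxnorm y = 1" for y
    using that assms maxnorm_coord_projection_le[of e y]
    by (simp add: scaleR_matrix_vector_assoc[symmetric] maxnorm_scaleR mult_left_le)
  have "coord_projection e *v 1 = 1" by (simp add: vec_eq_iff coord_projection_apply)
  then show "maxnorm (c *\<^sub>R coord_projection e *v 1) = c"
    by (simp add: assms scaleR_matrix_vector_assoc[symmetric] maxnorm_scaleR maxnorm_one)
qed (rule maxnorm_one)

lemma exists_disjoint_injections:
  assumes "CARD('n) + CARD('q) \<le> CARD('m)"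
  obtains en :: "'n::finite \<Rightarrow> 'm::finite" and eq :: "'q::finite \<Rightarrow> 'm"
  where "inj en" "inj eq" "range en \<inter> range eq = {}"
proof -
  obtain en :: "'n \<Rightarrow> 'm" where en: "inj en"
    using card_le_inj[of "UNIV::'n set" "UNIV::'m set"] assms by auto
  have "card (UNIV - range en) = CARD('m) - CARD('n)"
    using card_Diff_subset[of "range en" UNIV] card_image[OF en] by simp
  then have "CARD('q) \<le> card (UNIV - range en)"
    using assms by simp
  then obtain eq :: "'q \<Rightarrow> 'm" where "inj eq" "range eq \<subseteq> UNIV - range en"
    using card_le_inj[of "UNIV::'q set" "UNIV - range en"] by auto
  then show ?thesis using that en by blast
qed

section \<open>Regularity of compositions with bounded linear maps\<close>

lemma higher_derivative_homogeneous:
  fixes E :: "nat \<Rightarrow> 'a::real_normed_vector \<Rightarrow> 'a list \<Rightarrow> 'b::real_normed_vector"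
  assumes S: "open S"
    and E: "\<And>j x hs. j < k \<Longrightarrow> x \<in> S \<Longrightarrow> length hs = j \<Longrightarrow>
         ((\<lambda>v. E j v hs) has_derivative (\<lambda>h. E (Suc j) x (h # hs))) (at x)"
  shows "j \<le> k \<Longrightarrow> x \<in> S \<Longrightarrow> length hs = j \<Longrightarrow> E j x (map (scaleR c) hs) = c ^ j *\<^sub>R E j x hs"
proof (induction j arbitrary: x hs)
  case 0
  then show ?case by simp
next
  case (Suc j)
  then obtain h hs0 where hs: "hs = h # hs0" and len: "length hs0 = j"
    by (cases hs) auto
  have jk: "j < k" using Suc by simp
  have scaled: "((\<lambda>v. E j v (map (scaleR c) hs0)) has_derivative
      (\<lambda>h. E (Suc j) x (h # map (scaleR c) hs0))) (at x)"
    using E[OF jk Suc.prems(2)] len by simp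
  have unscaled: "((\<lambda>v. E j v hs0) has_derivative (\<lambda>h. E (Suc j) x (h # hs0))) (at x)"
    using E[OF jk Suc.prems(2)] len by simp
  have "((\<lambda>v. E j v (map (scaleR c) hs0)) has_derivative
      (\<lambda>h. c ^ j *\<^sub>R E (Suc j) x (h # hs0))) (at x)"
    by (rule has_derivative_transform_within_open
        [OF bounded_linear.has_derivative[OF bounded_linear_scaleR_right unscaled] S Suc.prems(2)])
      (use Suc.IH jk len in simp)
  with scaled have "(\<lambda>h. E (Suc j) x (h # map (scaleR c) hs0)) = (\<lambda>h. c ^ j *\<^sub>R E (Suc j) x (h # hs0))"
    by (rule has_derivative_unique)
  then have "E (Suc j) x (map (scaleR c) hs) = c ^ j *\<^sub>R E (Suc j) x ((c *\<^sub>R h) # hs0)"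
    using hs by (metis list.simps(9))
  also have "\<dots> = c ^ Suc j *\<^sub>R E (Suc j) x (h # hs0)"
    using linear_scale[OF has_derivative_linear[OF unscaled], of c h] by simp
  finally show ?case using hs by simp
qed

lemma Ck_b_imp_continuous_on:
  assumes "Ck_b k S f"
  shows "continuous_on S f"
proof -
  have "continuous_on ({0::real} \<times> S) (\<lambda>z. f (snd z))"
    using assms unfolding Ck_b_def C0k_b_def by simp
  then have "continuous_on S (\<lambda>x. f (snd (0::real, x)))"
    by (rule continuous_on_compose2) (auto intro: continuous_intros)
  then show ?thesis by simp
qed

lemma C0k_b_compose_bounded_linear:
  assumes F: "C0k_b k V Om F" and Q: "bounded_linear Q"
  shows "C0k_b k V Om (\<lambda>t u. Q (F t u))"
proof -
  obtain D where Fc: "continuous_on Om (\<lambda>z. F (fst z) (snd z))"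
    and D0: "\<forall>z\<in>Om. D 0 (fst z) (snd z) [] = F (fst z) (snd z)"
    and Dder: "\<forall>j<k. \<forall>z\<in>Om. \<forall>hs. length hs = j \<and> set hs \<subseteq> V \<longrightarrow>
        ((\<lambda>v. D j (fst z) v hs) has_derivative (\<lambda>h. D (Suc j) (fst z) (snd z) (h # hs)))
          (at (snd z) within V)"
    and Dcont: "\<forall>j\<in>{1..k}. \<forall>z\<in>Om. \<forall>e>0. \<exists>U. open U \<and> z \<in> U \<and>
        (\<forall>z'\<in>Om \<inter> U. \<forall>hs. length hs = j \<and> set hs \<subseteq> V \<and> (\<forall>h\<in>set hs. norm h \<le> 1) \<longrightarrow>
           norm (D j (fst z') (snd z') hs - D j (fst z) (snd z) hs) \<le> e)"
    and Dbd: "\<forall>j\<in>{1..k}. \<exists>B. \<forall>z\<in>Om. \<forall>hs. length hs = j \<and> set hs \<subseteq> V \<and> (\<forall>h\<in>set hs. norm h \<le> 1) \<longrightarrow>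
        norm (D j (fst z) (snd z) hs) \<le> B"
    using F unfolding C0k_b_def by blast
  obtain c where c: "0 < c" and Qc: "\<And>y. norm (Q y) \<le> norm y * c"
    using bounded_linear.pos_bounded[OF Q] by blast
  have Qdiff: "norm (Q a - Q b) \<le> norm (a - b) * c" for a b
    using Qc[of "a - b"] linear_diff[OF bounded_linear.linear[OF Q]] by simp
  show ?thesis unfolding C0k_b_def
  proof (intro conjI exI[of _ "\<lambda>j t u hs. Q (D j t u hs)"] ballI allI impI)
    show "continuous_on Om (\<lambda>z. Q (F (fst z) (snd z)))"
      by (rule continuous_on_compose2[OF linear_continuous_on[OF Q] Fc]) auto
  next
    fix z assume "z \<in> Om"
    then show "Q (D 0 (fst z) (snd z) []) = Q (F (fst z) (snd z))" using D0 by simp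
  next
    fix j z hs assume "j < k" "z \<in> Om" "length hs = j \<and> set hs \<subseteq> V"
    then show "((\<lambda>v. Q (D j (fst z) v hs)) has_derivative (\<lambda>h. Q (D (Suc j) (fst z) (snd z) (h # hs))))
        (at (snd z) within V)"
      by (intro bounded_linear.has_derivative[OF Q] Dder[rule_format]) simp_all
  next
    fix j z and e :: real assume "j \<in> {1..k}" "z \<in> Om" "0 < e"
    then obtain U where "open U" "z \<in> U" and U: "\<forall>z'\<in>Om \<inter> U. \<forall>hs. length hs = j \<and> set hs \<subseteq> V \<and>
        (\<forall>h\<in>set hs. norm h \<le> 1) \<longrightarrow> norm (D j (fst z') (snd z') hs - D j (fst z) (snd z) hs) \<le> e / c"
      using Dcont[rule_format, of j z "e / c"] c by auto
    show "\<exists>U. open U \<and> z \<in> U \<and> (\<forall>z'\<in>Om \<inter> U. \<forall>hs. length hs = j \<and> set hs \<subseteq> V \<and>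
        (\<forall>h\<in>set hs. norm h \<le> 1) \<longrightarrow> norm (Q (D j (fst z') (snd z') hs) - Q (D j (fst z) (snd z) hs)) \<le> e)"
    proof (intro exI[of _ U] conjI ballI allI impI)
      fix z' hs assume "z' \<in> Om \<inter> U" "length hs = j \<and> set hs \<subseteq> V \<and> (\<forall>h\<in>set hs. norm h \<le> 1)"
      then have "norm (D j (fst z') (snd z') hs - D j (fst z) (snd z) hs) * c \<le> e"
        using U c by (simp add: pos_le_divide_eq)
      then show "norm (Q (D j (fst z') (snd z') hs) - Q (D j (fst z) (snd z) hs)) \<le> e"
        using Qdiff[of "D j (fst z') (snd z') hs" "D j (fst z) (snd z) hs"] by linarith
    qed fact+
  next
    fix j assume "j \<in> {1..k}"
    then obtain B where B: "\<forall>z\<in>Om. \<forall>hs. length hs = j \<and> set hs \<subseteq> V \<and> (\<forall>h\<in>set hs. norm h \<le> 1) \<longrightarrow>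
        norm (D j (fst z) (snd z) hs) \<le> B"
      using Dbd by blast
    show "\<exists>B. \<forall>z\<in>Om. \<forall>hs. length hs = j \<and> set hs \<subseteq> V \<and> (\<forall>h\<in>set hs. norm h \<le> 1) \<longrightarrow>
        norm (Q (D j (fst z) (snd z) hs)) \<le> B"
    proof (intro exI[of _ "B * c"] ballI allI impI)
      fix z hs assume "z \<in> Om" "length hs = j \<and> set hs \<subseteq> V \<and> (\<forall>h\<in>set hs. norm h \<le> 1)"
      then have "norm (D j (fst z) (snd z) hs) * c \<le> B * c"
        using B c by (simp add: mult_right_mono)
      then show "norm (Q (D j (fst z) (snd z) hs)) \<le> B * c"
        using Qc[of "D j (fst z) (snd z) hs"] by linarith
    qed
  qed
qed

lemma Ck_b_derivativesE:
  fixes f :: "'a::real_normed_vector \<Rightarrow> 'b::real_normed_vector"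
  assumes f: "Ck_b k S f" and S: "open S" and r: "0 < r"
  obtains D :: "nat \<Rightarrow> 'a \<Rightarrow> 'a list \<Rightarrow> 'b" where
    "\<And>x. x \<in> S \<Longrightarrow> D 0 x [] = f x"
    "\<And>j x hs. j < k \<Longrightarrow> x \<in> S \<Longrightarrow> length hs = j \<Longrightarrow>
       ((\<lambda>v. D j v hs) has_derivative (\<lambda>h. D (Suc j) x (h # hs))) (at x)"
    "\<And>j x e. j \<in> {1..k} \<Longrightarrow> x \<in> S \<Longrightarrow> 0 < e \<Longrightarrow> \<exists>U. open U \<and> x \<in> U \<and>
       (\<forall>x'\<in>S \<inter> U. \<forall>hs. length hs = j \<and> (\<forall>h\<in>set hs. norm h \<le> r) \<longrightarrow> norm (D j x' hs - D j x hs) \<le> e)"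
    "\<And>j. j \<in> {1..k} \<Longrightarrow> \<exists>B. \<forall>x\<in>S. \<forall>hs. length hs = j \<and> (\<forall>h\<in>set hs. norm h \<le> r) \<longrightarrow>
       norm (D j x hs) \<le> B"
proof -
  obtain D where D0: "\<forall>x\<in>S. D 0 0 x [] = f x"
    and Dder: "\<forall>j<k. \<forall>x\<in>S. \<forall>hs. length hs = j \<longrightarrow>
        ((\<lambda>v. D j 0 v hs) has_derivative (\<lambda>h. D (Suc j) 0 x (h # hs))) (at x)"
    and Dcont: "\<forall>j\<in>{1..k}. \<forall>x\<in>S. \<forall>e>0. \<exists>U. open U \<and> (0::real, x) \<in> U \<and>
        (\<forall>z'\<in>({0} \<times> S) \<inter> U. \<forall>hs. length hs = j \<and> (\<forall>h\<in>set hs. norm h \<le> 1) \<longrightarrow>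
           norm (D j (fst z') (snd z') hs - D j 0 x hs) \<le> e)"
    and Dbd: "\<forall>j\<in>{1..k}. \<exists>B. \<forall>x\<in>S. \<forall>hs. length hs = j \<and> (\<forall>h\<in>set hs. norm h \<le> 1) \<longrightarrow>
        norm (D j 0 x hs) \<le> B"
    using f unfolding Ck_b_def C0k_b_def by auto
  define unit where "unit hs = map (scaleR (1 / r)) hs" for hs :: "'a list"
  have unit_le_1: "\<forall>h\<in>set (unit hs). norm h \<le> 1" if "\<forall>h\<in>set hs. norm h \<le> r" for hs
    using that r by (auto simp: unit_def field_simps)
  txt \<open>The bounds of Ck_b only concern unit directions; homogeneity transfers them to radius r.\<close>
  have rescale: "D j 0 x hs = r ^ j *\<^sub>R D j 0 x (unit hs)"
    if "j \<le> k" "x \<in> S" "length hs = j" for j x hs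
  proof -
    have "D j 0 x (map (scaleR r) (unit hs)) = r ^ j *\<^sub>R D j 0 x (unit hs)"
      by (rule higher_derivative_homogeneous[where E="\<lambda>j x hs. D j 0 x hs", OF S Dder[rule_format]])
        (use that in \<open>auto simp: unit_def\<close>)
    moreover have "map (scaleR r) (unit hs) = hs"
      using r by (simp add: unit_def map_idI)
    ultimately show ?thesis by simp
  qed
  show thesis
  proof (rule that[of "\<lambda>j x hs. D j 0 x hs"])
    fix j x and e :: real assume j: "j \<in> {1..k}" and x: "x \<in> S" and "0 < e"
    then obtain U where "open U" "(0::real, x) \<in> U" and U: "\<forall>z'\<in>({0} \<times> S) \<inter> U. \<forall>hs.
        length hs = j \<and> (\<forall>h\<in>set hs. norm h \<le> 1) \<longrightarrow> norm (D j (fst z') (snd z') hs - D j 0 x hs) \<le> e / r ^ j"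
      using Dcont[rule_format, of j x "e / r ^ j"] r by auto
    have "norm (D j 0 x' hs - D j 0 x hs) \<le> e"
      if x': "x' \<in> S \<inter> Pair 0 -` U" and hs: "length hs = j \<and> (\<forall>h\<in>set hs. norm h \<le> r)" for x' hs
    proof -
      have "norm (D j 0 x' (unit hs) - D j 0 x (unit hs)) \<le> e / r ^ j"
        using U[rule_format, of "(0, x')" "unit hs"] x' hs unit_le_1 by (auto simp: unit_def)
      moreover have "D j 0 x' hs - D j 0 x hs = r ^ j *\<^sub>R (D j 0 x' (unit hs) - D j 0 x (unit hs))"
        using rescale j x x' hs by (simp add: scaleR_diff_right)
      ultimately show ?thesis
        using r by (simp add: pos_le_divide_eq mult.commute)
    qed
    moreover have "open (Pair (0::real) -` U)"
      using open_vimage[OF \<open>open U\<close>, of "Pair 0"] by (simp add: continuous_intros)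
    ultimately show "\<exists>U. open U \<and> x \<in> U \<and> (\<forall>x'\<in>S \<inter> U. \<forall>hs. length hs = j \<and>
        (\<forall>h\<in>set hs. norm h \<le> r) \<longrightarrow> norm (D j 0 x' hs - D j 0 x hs) \<le> e)"
      using \<open>(0, x) \<in> U\<close> by blast
  next
    fix j assume j: "j \<in> {1..k}"
    then obtain B where B: "\<forall>x\<in>S. \<forall>hs. length hs = j \<and> (\<forall>h\<in>set hs. norm h \<le> 1) \<longrightarrow>
        norm (D j 0 x hs) \<le> B"
      using Dbd by blast
    have "norm (D j 0 x hs) \<le> r ^ j * B"
      if "x \<in> S" "length hs = j \<and> (\<forall>h\<in>set hs. norm h \<le> r)" for x hs
      using B[rule_format, of x "unit hs"] rescale[of j x hs] that j r unit_le_1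
      by (simp add: unit_def mult_left_mono)
    then show "\<exists>B. \<forall>x\<in>S. \<forall>hs. length hs = j \<and> (\<forall>h\<in>set hs. norm h \<le> r) \<longrightarrow>
        norm (D j 0 x hs) \<le> B"
      by blast
  qed (use D0 Dder in auto)
qed

lemma Ck_b_compose_bounded_linear:
  fixes f :: "'a::real_normed_vector \<Rightarrow> 'b::real_normed_vector"
    and L :: "'c::real_normed_vector \<Rightarrow> 'a" and Om :: "('p::topological_space \<times> 'c) set"
  assumes f: "Ck_b k S f" and S: "open S" and L: "bounded_linear L"
    and Om: "\<And>z. z \<in> Om \<Longrightarrow> L (snd z) \<in> S"
  shows "C0k_b k V Om (\<lambda>t u. f (L u))"
proof -
  obtain c where c: "0 < c" and Lc: "\<And>h. norm (L h) \<le> norm h * c"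
    using bounded_linear.pos_bounded[OF L] by blast
  have L_unit: "norm (L h) \<le> c" if "norm h \<le> 1" for h
    using Lc[of h] mult_right_mono[OF that less_imp_le[OF c]] by simp
  obtain D where D0: "\<And>x. x \<in> S \<Longrightarrow> D 0 x [] = f x"
    and Dder: "\<And>j x hs. j < k \<Longrightarrow> x \<in> S \<Longrightarrow> length hs = j \<Longrightarrow>
       ((\<lambda>v. D j v hs) has_derivative (\<lambda>h. D (Suc j) x (h # hs))) (at x)"
    and Dcont: "\<And>j x e. j \<in> {1..k} \<Longrightarrow> x \<in> S \<Longrightarrow> 0 < e \<Longrightarrow> \<exists>U. open U \<and> x \<in> U \<and>
       (\<forall>x'\<in>S \<inter> U. \<forall>hs. length hs = j \<and> (\<forall>h\<in>set hs. norm h \<le> c) \<longrightarrow> norm (D j x' hs - D j x hs) \<le> e)"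
    and Dbd: "\<And>j. j \<in> {1..k} \<Longrightarrow> \<exists>B. \<forall>x\<in>S. \<forall>hs. length hs = j \<and> (\<forall>h\<in>set hs. norm h \<le> c) \<longrightarrow>
       norm (D j x hs) \<le> B"
    by (rule Ck_b_derivativesE[OF f S c]) blast
  have Lsnd: "continuous_on A (\<lambda>z::'p \<times> 'c. L (snd z))" for A
    by (rule continuous_on_compose2[OF linear_continuous_on[OF L]]) (auto intro: continuous_intros)
  show ?thesis unfolding C0k_b_def
  proof (intro conjI exI[of _ "\<lambda>j t u hs. D j (L u) (map L hs)"] ballI allI impI)
    show "continuous_on Om (\<lambda>z. f (L (snd z)))"
      by (rule continuous_on_compose2[OF Ck_b_imp_continuous_on[OF f] Lsnd]) (use Om in auto)
  next
    fix j z hs assume "j < k" "z \<in> Om" "length hs = j \<and> set hs \<subseteq> V"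
    then have "((\<lambda>v. D j v (map L hs)) has_derivative (\<lambda>h. D (Suc j) (L (snd z)) (h # map L hs)))
        (at (L (snd z)))"
      using Om by (intro Dder) auto
    from has_derivative_compose[OF bounded_linear_imp_has_derivative[OF L] this]
    show "((\<lambda>v. D j (L v) (map L hs)) has_derivative
        (\<lambda>h. D (Suc j) (L (snd z)) (map L (h # hs)))) (at (snd z) within V)"
      by (simp add: o_def)
  next
    fix j z and e :: real assume j: "j \<in> {1..k}" and z: "z \<in> Om" and e: "0 < e"
    obtain U where "open U" "L (snd z) \<in> U" and U: "\<forall>x'\<in>S \<inter> U. \<forall>hs. length hs = j \<and>
        (\<forall>h\<in>set hs. norm h \<le> c) \<longrightarrow> norm (D j x' hs - D j (L (snd z)) hs) \<le> e"
      using Dcont[OF j Om[OF z] e] by blast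
    have "open ((\<lambda>z::'p \<times> 'c. L (snd z)) -` U)"
      using open_vimage[OF \<open>open U\<close> Lsnd] .
    moreover have "norm (D j (L (snd z')) (map L hs) - D j (L (snd z)) (map L hs)) \<le> e"
      if "z' \<in> Om \<inter> (\<lambda>z. L (snd z)) -` U" "length hs = j \<and> (\<forall>h\<in>set hs. norm h \<le> 1)" for z' hs
      using U[rule_format, of "L (snd z')" "map L hs"] that Om L_unit by auto
    ultimately show "\<exists>U. open U \<and> z \<in> U \<and> (\<forall>z'\<in>Om \<inter> U. \<forall>hs. length hs = j \<and> set hs \<subseteq> V \<and>
        (\<forall>h\<in>set hs. norm h \<le> 1) \<longrightarrow> norm (D j (L (snd z')) (map L hs) - D j (L (snd z)) (map L hs)) \<le> e)"
      using \<open>L (snd z) \<in> U\<close> by blast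
  next
    fix j assume "j \<in> {1..k}"
    then obtain B where B: "\<forall>x\<in>S. \<forall>hs. length hs = j \<and> (\<forall>h\<in>set hs. norm h \<le> c) \<longrightarrow>
        norm (D j x hs) \<le> B"
      using Dbd by blast
    have "norm (D j (L (snd z)) (map L hs)) \<le> B"
      if "z \<in> Om" "length hs = j \<and> (\<forall>h\<in>set hs. norm h \<le> 1)" for z hs
      using B[rule_format, of "L (snd z)" "map L hs"] that Om L_unit by auto
    then show "\<exists>B. \<forall>z\<in>Om. \<forall>hs. length hs = j \<and> set hs \<subseteq> V \<and> (\<forall>h\<in>set hs. norm h \<le> 1) \<longrightarrow>
        norm (D j (L (snd z)) (map L hs)) \<le> B"
      by blast
  qed (use D0 Om in simp)
qed

section \<open>Solutions with a conserved component\<close>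

lemma bounded_linear_apply_bcontfun:
  "bounded_linear (\<lambda>u::'a::topological_space \<Rightarrow>\<^sub>C 'b::real_normed_vector. apply_bcontfun u s)"
  by (rule bounded_linear_intro[where K=1]) (auto simp: norm_bounded)

lemma apply_cnst [simp]: "apply_bcontfun (cnst a) s = a"
  by (simp add: cnst_def)

lemma cnst_in_Cspace: "cnst a \<in> Cspace tau"
  by (simp add: Cspace_def)

lemma Cnorm_cnst_diff: "0 \<le> tau \<Longrightarrow> Cnorm tau (cnst a - cnst b) = maxnorm (a - b)"
  unfolding Cnorm_def by (simp add: cSUP_const)

lemma seg_apply:
  fixes y :: "real \<Rightarrow> real^'m"
  assumes "continuous_on {t - tau..t} y" "0 \<le> tau"
  shows "apply_bcontfun (seg tau y t) s = y (t + max (-tau) (min 0 s))"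
proof -
  let ?g = "\<lambda>s. t + max (-tau) (min 0 s)"
  have range_g: "range ?g \<subseteq> {t - tau..t}" using assms(2) by auto
  have "continuous_on UNIV (\<lambda>s. y (?g s))"
    by (rule continuous_on_compose2[OF assms(1) _ range_g]) (intro continuous_intros)
  moreover have "bounded (range (\<lambda>s. y (?g s)))"
    using range_g compact_imp_bounded[OF compact_continuous_image[OF assms(1) compact_Icc]]
    by (auto intro: bounded_subset)
  ultimately have "(\<lambda>s. y (?g s)) \<in> bcontfun" by (simp add: bcontfun_def)
  then show ?thesis unfolding seg_def by (simp add: Bcontfun_inverse)
qed

lemma seg_in_Cspace:
  fixes y :: "real \<Rightarrow> real^'m"
  assumes "continuous_on {t - tau..t} y" "0 \<le> tau"
  shows "seg tau y t \<in> Cspace tau"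
  unfolding Cspace_def using seg_apply[OF assms] assms(2)
  by (auto simp: max_def min_def)

lemma seg_apply_0:
  fixes y :: "real \<Rightarrow> real^'m"
  assumes "continuous_on {t - tau..t} y" "0 \<le> tau"
  shows "apply_bcontfun (seg tau y t) 0 = y t"
  using seg_apply[OF assms] assms(2) by simp

lemma is_sol_affine_drift:
  fixes P :: "real^'m \<Rightarrow> 'a::real_normed_vector"
  assumes F: "\<And>t u. F t u = G (P (apply_bcontfun u 0))"
    and P: "bounded_linear P" and PG: "\<And>v. P (G v) = 0"
    and tau: "0 \<le> tau" and c: "0 < c"
    and in_domain: "\<And>t. t \<in> {0..<c} \<Longrightarrow> t \<in> Ot \<and> seg tau (\<lambda>t. a + max 0 t *\<^sub>R G (P a)) t \<in> Oy"
  shows "is_sol tau Ot Oy F 0 (cnst a) c (\<lambda>t. a + max 0 t *\<^sub>R G (P a))"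
proof -
  let ?y = "\<lambda>t. a + max 0 t *\<^sub>R G (P a)"
  have cont: "continuous_on A ?y" for A by (intro continuous_intros)
  have "P (?y t) = P a" for t
    using linear_add[OF bounded_linear.linear[OF P]] linear_scale[OF bounded_linear.linear[OF P]]
    by (simp add: PG)
  then have field: "F t (seg tau ?y t) = G (P a)" for t
    by (simp add: F seg_apply_0[OF cont tau])
  have "(?y has_vector_derivative G (P a)) (at t within {0..<c})" if "t \<in> {0..<c}" for t
  proof -
    have "((\<lambda>t. a + t *\<^sub>R G (P a)) has_vector_derivative G (P a)) (at t within {0..<c})"
      by (auto intro!: derivative_eq_intros)
    then show ?thesis
      by (rule has_vector_derivative_transform_within[where d=1]) (use that in auto)
  qed
  then show ?thesis
    unfolding is_sol_def using c cont in_domain field by auto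
qed

lemma is_sol_eq_affine_drift:
  fixes P :: "real^'m \<Rightarrow> 'a::real_normed_vector"
  assumes F: "\<And>t u. F t u = G (P (apply_bcontfun u 0))"
    and P: "bounded_linear P" and PG: "\<And>v. P (G v) = 0"
    and tau: "0 \<le> tau" and sol: "is_sol tau Ot Oy F 0 (cnst a) c y"
  shows "\<forall>t\<in>{-tau..<c}. y t = a + max 0 t *\<^sub>R G (P a)"
proof -
  from sol have c: "0 < c" and y_cont: "continuous_on {-tau..<c} y"
    and init: "\<And>s. s \<in> {-tau..0} \<Longrightarrow> y s = a"
    and y_der: "\<And>t. t \<in> {0..<c} \<Longrightarrow> (y has_vector_derivative F t (seg tau y t)) (at t within {0..<c})"
    unfolding is_sol_def by auto
  have y0: "y 0 = a" using init tau by simp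
  have y': "(y has_vector_derivative G (P (y t))) (at t within {0..<c})" if t: "t \<in> {0..<c}" for t
  proof -
    have "continuous_on {t - tau..t} y"
      by (rule continuous_on_subset[OF y_cont]) (use t in auto)
    then show ?thesis using y_der[OF t] by (simp add: F seg_apply_0[OF _ tau])
  qed
  txt \<open>The component P of the state is conserved, so the field is constant along y.\<close>
  have Py: "P (y t) = P a" if "t \<in> {0..<c}" for t
  proof -
    have "((\<lambda>t. P (y t)) has_derivative (\<lambda>h. 0)) (at s within {0..<c})" if "s \<in> {0..<c}" for s
      using bounded_linear.has_derivative[OF P y'[OF that, unfolded has_vector_derivative_def]]
        linear_scale[OF bounded_linear.linear[OF P]]
      by (simp add: PG)
    then show ?thesis
      using has_derivative_zero_unique[of "{0..<c}" "\<lambda>t. P (y t)" t 0] that c y0 by simp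
  qed
  have yt: "y t = a + t *\<^sub>R G (P a)" if "t \<in> {0..<c}" for t
  proof -
    have "((\<lambda>t. y t - t *\<^sub>R G (P a)) has_derivative (\<lambda>h. 0)) (at s within {0..<c})"
      if "s \<in> {0..<c}" for s
    proof -
      have "((\<lambda>t. y t - t *\<^sub>R G (P a)) has_vector_derivative G (P a) - 1 *\<^sub>R G (P a)) (at s within {0..<c})"
        using y'[OF that] Py[OF that] by (auto intro!: derivative_eq_intros)
      then show ?thesis by (simp add: has_vector_derivative_def)
    qed
    then show ?thesis
      using has_derivative_zero_unique[of "{0..<c}" "\<lambda>t. y t - t *\<^sub>R G (P a)" t 0] that c y0
      by (simp add: algebra_simps)
  qed
  show ?thesis
  proof
    fix t assume "t \<in> {-tau..<c}"
    then show "y t = a + max 0 t *\<^sub>R G (P a)"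
      using init[of t] yt[of t] by (cases "t < 0") auto
  qed
qed

lemma ndde_map_eqI:
  assumes sol: "is_sol tau Ot Oy F 0 (cnst (W *v x + b)) c ys" and horizon: "T < c" "-tau \<le> T"
    and unique: "\<And>c' y. is_sol tau Ot Oy F 0 (cnst (W *v x + b)) c' y \<Longrightarrow> \<forall>t\<in>{-tau..<c'}. y t = ys t"
  shows "ndde_map tau T Ot Oy F W b Wt bt x = Wt *v ys T + bt"
proof -
  have "(THE v. \<exists>y c. is_sol tau Ot Oy F 0 (cnst (W *v x + b)) c y \<and> T < c \<and> y T = v) = ys T"
  proof (rule the_equality)
    show "\<exists>y c. is_sol tau Ot Oy F 0 (cnst (W *v x + b)) c y \<and> T < c \<and> y T = ys T"
      using sol horizon by blast
  next
    fix v assume "\<exists>y c. is_sol tau Ot Oy F 0 (cnst (W *v x + b)) c y \<and> T < c \<and> y T = v"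
    then obtain y c' where "is_sol tau Ot Oy F 0 (cnst (W *v x + b)) c' y" "T < c'" "y T = v"
      by blast
    then show "v = ys T" using unique horizon by fastforce
  qed
  then show ?thesis unfolding ndde_map_def by simp
qed

section \<open>The coordinate construction\<close>

locale coordinate_ndde =
  fixes X :: "(real^'n) set" and Psi :: "real^'n \<Rightarrow> real^'q"
    and en :: "'n \<Rightarrow> 'm::finite" and eq :: "'q \<Rightarrow> 'm" and tau T w wt :: real
  assumes open_X: "open X" and inj_en: "inj en" and inj_eq: "inj eq"
    and disjoint: "range en \<inter> range eq = {}"
    and tau: "0 \<le> tau" and T_pos: "0 < T" and w_pos: "0 < w" and wt_pos: "0 < wt"
begin

definition input_matrix :: "real^'n^'m" where
  "input_matrix = w *\<^sub>R coord_embedding en"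

definition output_matrix :: "real^'m^'q" where
  "output_matrix = wt *\<^sub>R coord_projection eq"

definition read_input :: "real^'m \<Rightarrow> real^'n" where
  "read_input y = (1 / w) *\<^sub>R (coord_projection en *v y)"

definition write_output :: "real^'q \<Rightarrow> real^'m" where
  "write_output z = (1 / (wt * T)) *\<^sub>R (coord_embedding eq *v z)"

definition vector_field :: "real \<Rightarrow> (real \<Rightarrow>\<^sub>C (real^'m)) \<Rightarrow> real^'m" where
  "vector_field t u = write_output (Psi (read_input (apply_bcontfun u 0)))"

definition history_domain :: "(real \<Rightarrow>\<^sub>C (real^'m)) set" where
  "history_domain = Cspace tau \<inter> {u. read_input (apply_bcontfun u 0) \<in> X}"

lemma bounded_linear_read_input: "bounded_linear read_input"
  unfolding read_input_def
  by (intro bounded_linear_compose[OF bounded_linear_scaleR_right] matrix_vector_mul_bounded_linear)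

lemma bounded_linear_write_output: "bounded_linear write_output"
  unfolding write_output_def
  by (intro bounded_linear_compose[OF bounded_linear_scaleR_right] matrix_vector_mul_bounded_linear)

lemma read_input_input_matrix [simp]: "read_input (input_matrix *v x) = x"
  using w_pos inj_en
  by (simp add: read_input_def input_matrix_def matrix_vector_mult_scaleR
      scaleR_matrix_vector_assoc[symmetric] coord_projection_embedding)

lemma read_input_write_output [simp]: "read_input (write_output z) = 0"
  using disjoint
  by (simp add: read_input_def write_output_def matrix_vector_mult_scaleR
      coord_projection_embedding_disjoint)

lemma output_matrix_input_matrix [simp]: "output_matrix *v (input_matrix *v x) = 0"
proof -
  have "range eq \<inter> range en = {}" using disjoint by blast
  then show ?thesis
    by (simp add: output_matrix_def input_matrix_def scaleR_matrix_vector_assoc[symmetric]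
        matrix_vector_mult_scaleR coord_projection_embedding_disjoint)
qed

lemma output_matrix_write_output [simp]: "output_matrix *v write_output z = (1 / T) *\<^sub>R z"
  using inj_eq wt_pos
  by (simp add: output_matrix_def write_output_def scaleR_matrix_vector_assoc[symmetric]
      matrix_vector_mult_scaleR coord_projection_embedding)

lemma output_matrix_drift: "output_matrix *v (input_matrix *v x + T *\<^sub>R write_output z) = z"
  using T_pos by (simp add: matrix_vector_right_distrib matrix_vector_mult_scaleR)

lemma solution_exists:
  assumes "x \<in> X" "0 < c"
  shows "is_sol tau UNIV history_domain vector_field 0 (cnst (input_matrix *v x)) c
    (\<lambda>t. input_matrix *v x + max 0 t *\<^sub>R write_output (Psi x))"
proof -
  let ?y = "\<lambda>t. input_matrix *v x + max 0 t *\<^sub>R write_output (Psi x)"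
  have "read_input (?y t) = x" for t
    using linear_add[OF bounded_linear.linear[OF bounded_linear_read_input]]
      linear_scale[OF bounded_linear.linear[OF bounded_linear_read_input]]
    by simp
  then have "seg tau ?y t \<in> history_domain" for t
    unfolding history_domain_def using assms(1) tau
    by (simp add: seg_in_Cspace seg_apply_0 continuous_intros)
  then show ?thesis
    using is_sol_affine_drift[where F=vector_field and G="\<lambda>v. write_output (Psi v)"
        and a="input_matrix *v x" and Ot=UNIV and Oy=history_domain, OF vector_field_def
        bounded_linear_read_input read_input_write_output tau assms(2)]
    by simp
qed

lemma solution_unique:
  assumes "is_sol tau Ot Oy vector_field 0 (cnst (input_matrix *v x)) c y"
  shows "\<forall>t\<in>{-tau..<c}. y t = input_matrix *v x + max 0 t *\<^sub>R write_output (Psi x)"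
  using is_sol_eq_affine_drift[where F=vector_field and G="\<lambda>v. write_output (Psi v)", OF vector_field_def
      bounded_linear_read_input read_input_write_output tau assms]
  by simp

lemma ndde_map_eq:
  assumes "x \<in> X"
  shows "ndde_map tau T UNIV history_domain vector_field input_matrix 0 output_matrix 0 x = Psi x"
proof -
  have "is_sol tau UNIV history_domain vector_field 0 (cnst (input_matrix *v x + 0)) (T + 1)
      (\<lambda>t. input_matrix *v x + max 0 t *\<^sub>R write_output (Psi x))"
    using solution_exists[OF assms] T_pos by simp
  then have "ndde_map tau T UNIV history_domain vector_field input_matrix 0 output_matrix 0 x
      = output_matrix *v (input_matrix *v x + max 0 T *\<^sub>R write_output (Psi x)) + 0"
    by (rule ndde_map_eqI) (use T_pos tau solution_unique in auto)
  then show ?thesis using T_pos by (simp add: output_matrix_drift)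
qed

lemma openin_history_domain: "openin (top_of_set (Cspace tau)) history_domain"
  unfolding history_domain_def
proof (rule openin_open_Int)
  have "continuous_on UNIV (\<lambda>u. read_input (apply_bcontfun u 0 :: real^'m))"
    by (intro linear_continuous_on bounded_linear_compose[OF bounded_linear_read_input]
        bounded_linear_apply_bcontfun)
  from open_vimage[OF open_X this]
  show "open {u. read_input (apply_bcontfun u 0) \<in> X}"
    unfolding vimage_def .
qed

lemma C0k_b_vector_field:
  assumes "Ck_b k X Psi"
  shows "C0k_b k (Cspace tau) (UNIV \<times> history_domain) vector_field"
proof -
  have "C0k_b k (Cspace tau) (UNIV \<times> history_domain) (\<lambda>t u. Psi (read_input (apply_bcontfun u 0)))"
    by (rule Ck_b_compose_bounded_linear[OF assms open_X
          bounded_linear_compose[OF bounded_linear_read_input bounded_linear_apply_bcontfun]])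
      (auto simp: history_domain_def)
  from C0k_b_compose_bounded_linear[OF this bounded_linear_write_output]
  show ?thesis
    unfolding vector_field_def[abs_def] .
qed

lemma is_NDDE_construction:
  assumes "Ck_b k X Psi"
  shows "is_NDDE k tau T X UNIV history_domain vector_field input_matrix 0 output_matrix 0"
proof -
  have initial: "cnst (input_matrix *v x) \<in> history_domain" if "x \<in> X" for x
    using that by (simp add: history_domain_def cnst_in_Cspace)
  have exists: "\<exists>y c. T < c \<and> is_sol tau UNIV history_domain vector_field 0 (cnst (input_matrix *v x)) c y"
    if "x \<in> X" for x
  proof -
    have "0 < T + 1" using T_pos by simp
    with solution_exists[OF that this] show ?thesis by force
  qed
  have unique: "y1 t = y2 t"
    if "is_sol tau UNIV history_domain vector_field 0 (cnst (input_matrix *v x)) c1 y1"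
      "is_sol tau UNIV history_domain vector_field 0 (cnst (input_matrix *v x)) c2 y2"
      "t \<in> {-tau..<min c1 c2}" for x c1 c2 y1 y2 t
    using solution_unique[OF that(1)] solution_unique[OF that(2)] that(3) by simp
  have "continuous_on X (ndde_map tau T UNIV history_domain vector_field input_matrix 0 output_matrix 0)"
    using continuous_on_eq[OF Ck_b_imp_continuous_on[OF assms]] ndde_map_eq by simp
  then show ?thesis
    unfolding is_NDDE_def
    using openin_history_domain initial exists unique C0k_b_vector_field[OF assms] by auto
qed

lemma maxnorm_input_matrix: "maxnorm (input_matrix *v x) = w * maxnorm x"
  using w_pos inj_en
  by (simp add: input_matrix_def scaleR_matrix_vector_assoc[symmetric] maxnorm_scaleR
      maxnorm_coord_embedding)

lemma maxnorm_write_output: "maxnorm (write_output z) = maxnorm z / (wt * T)"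
  using wt_pos T_pos inj_eq
  by (simp add: write_output_def maxnorm_scaleR maxnorm_coord_embedding)

lemma vector_field_lipschitz:
  assumes lip: "\<forall>x\<in>X. \<forall>x'\<in>X. maxnorm (Psi x - Psi x') \<le> KPsi * maxnorm (x - x')"
    and KT: "KPsi / (w * wt) \<le> K * T" and x: "x \<in> X" "x' \<in> X"
  shows "maxnorm (vector_field t (cnst (input_matrix *v x)) - vector_field t (cnst (input_matrix *v x')))
    \<le> K * Cnorm tau (cnst (input_matrix *v x) - cnst (input_matrix *v x'))"
proof -
  have bound: "KPsi / (wt * T) \<le> K * w"
    using KT w_pos wt_pos T_pos by (simp add: field_simps)
  have rate: "KPsi * d / (wt * T) \<le> K * (w * d)" if "0 \<le> d" for d
  proof -
    have "KPsi * d / (wt * T) = KPsi / (wt * T) * d" by simp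
    also have "\<dots> \<le> K * w * d" by (rule mult_right_mono[OF bound that])
    finally show ?thesis by (simp add: mult.assoc)
  qed
  have "maxnorm (vector_field t (cnst (input_matrix *v x)) - vector_field t (cnst (input_matrix *v x')))
      = maxnorm (Psi x - Psi x') / (wt * T)"
    by (simp add: vector_field_def maxnorm_write_output
        linear_diff[OF bounded_linear.linear[OF bounded_linear_write_output], symmetric])
  also have "\<dots> \<le> KPsi * maxnorm (x - x') / (wt * T)"
    using lip x wt_pos T_pos by (simp add: divide_right_mono)
  also have "\<dots> \<le> K * (w * maxnorm (x - x'))"
    by (rule rate[OF maxnorm_nonneg])
  also have "w * maxnorm (x - x') = Cnorm tau (cnst (input_matrix *v x) - cnst (input_matrix *v x'))"
    using tau by (simp add: Cnorm_cnst_diff maxnorm_input_matrix matrix_vector_mult_diff_distrib[symmetric])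
  finally show ?thesis .
qed

lemma matnorm_input_matrix: "matnorm input_matrix = w"
  using matnorm_scaled_coord_embedding[OF inj_en, of w] w_pos by (simp add: input_matrix_def)

lemma matnorm_output_matrix: "matnorm output_matrix = wt"
  using matnorm_scaled_coord_projection[of wt eq] wt_pos by (simp add: output_matrix_def)

end

theorem mainTheorem5:
  fixes k :: nat and X :: "(real^'n) set" and Psi :: "real^'n \<Rightarrow> real^'q"
    and KPsi T tau w wt K :: real
  assumes X_open: "open X"
    and Psi_reg: "Ck_b k X Psi"
    and KPsi: "0 \<le> KPsi"
    and Psi_lip: "\<forall>x\<in>X. \<forall>x'\<in>X. maxnorm (Psi x - Psi x') \<le> KPsi * maxnorm (x - x')"
    and m_ge: "CARD('m) \<ge> CARD('n) + CARD('q)"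
    and T_pos: "0 < T" and tau: "0 \<le> tau" "tau \<le> T"
    and w_pos: "0 < w" and wt_pos: "0 < wt" and K_nn: "0 \<le> K"
    and KT: "K * T \<ge> KPsi / (w * wt)"
  shows "\<exists>(Oy :: ((real \<Rightarrow>\<^sub>C (real^'m))) set) F (W :: real^'n^'m) b (Wt :: real^'m^'q) bt.
           is_NDDE k tau T X UNIV Oy F W b Wt bt \<and>
           CARD('m) > max CARD('n) CARD('q) \<and>
           (\<forall>x\<in>X. ndde_map tau T UNIV Oy F W b Wt bt x = Psi x) \<and>
           (\<forall>t. \<forall>u\<in>cnst ` (\<lambda>x. W *v x + b) ` X. \<forall>v\<in>cnst ` (\<lambda>x. W *v x + b) ` X.
               maxnorm (F t u - F t v) \<le> K * Cnorm tau (u - v)) \<and>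
           matnorm W = w \<and> matnorm Wt = wt"
proof -
  obtain en :: "'n \<Rightarrow> 'm" and eq :: "'q \<Rightarrow> 'm" where "inj en" "inj eq" "range en \<inter> range eq = {}"
    using exists_disjoint_injections m_ge by blast
  then interpret coordinate_ndde X Psi en eq tau T w wt
    using X_open tau T_pos w_pos wt_pos by unfold_locales auto
  have "0 < CARD('n)" "0 < CARD('q)"
    by (simp_all add: card_gt_0_iff)
  with m_ge have "max CARD('n) CARD('q) < CARD('m)"
    unfolding max_less_iff_conj by linarith
  moreover have "\<forall>t. \<forall>u\<in>cnst ` (\<lambda>x. input_matrix *v x + 0) ` X. \<forall>v\<in>cnst ` (\<lambda>x. input_matrix *v x + 0) ` X.
      maxnorm (vector_field t u - vector_field t v) \<le> K * Cnorm tau (u - v)"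
    using vector_field_lipschitz[OF Psi_lip KT] by auto
  ultimately show ?thesis
    using is_NDDE_construction[OF Psi_reg] ndde_map_eq matnorm_input_matrix matnorm_output_matrix by blast
qed

end
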